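(* Let $E\subset\mathbb{R}^2$, $E_o:=\{(x,y)\in E:x\neq y\}$, and let $C$ be a connected component of $E_o$ containing no identifying cycles. Let $C^{\mathsf{x}}$ and $C^{\mathsf{y}}$ denote the projections of $C$ onto the first and second coordinate. (a) For any $v:C\to\mathbb{R}$ of the form $v(x,y)=h(x)(y-x)+g(y)$ on $C$, the portfolio positions of $v$ on $C$ are not unique at any point of $C$: for every $(x,y)\in C$ there exist two portfolio positions $(h,g),(\tilde h,\tilde g)$ of $v$ on $C$ with $h(x)\neq\tilde h(x)$ and $g(y)\neq\tilde g(y)$; and the set of portfolio positions of $v$ on $C$ (restricted to $C^{\mathsf{x}}\times C^{\mathsf{y}}$) is a one-parameter family. (b) Fix $(x_0,y_0)\in C$. There exist functions $a,b:\mathbb{R}\to\mathbb{R}\setminus\{0\}$ such that $a(x)b(y)=y-x$ for all $(x,y)\in C$ and $a(x_0)=1$, and these are unique on $C^{\mathsf{x}}$ and $C^{\mathsf{y}}$, respectively. Let $v_n(x,y)=h_n(x)(y-x)+g_n(y)$, with $h_n,g_n:\mathbb{R}\to\mathbb{R}$, converge pointwise on $C$ to $v:C\to\mathbb{R}$. Define $h'_n(x):=h_n(x)-h_n(x_0)/a(x)$ and $g'_n(y):=g_n(y)+h_n(x_0)b(y)$. Then $v_n(x,y)=h'_n(x)(y-x)+g'_n(y)$ on $C$, the pointwise limits $h':=\lim_n h'_n$ on $C^{\mathsf{x}}$ and $g':=\lim_n g'_n$ on $C^{\mathsf{y}}$ exist, and $v(x,y)=h'(x)(y-x)+g'(y)$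 for all $(x,y)\in C$. In particular, semistatic strategies on $C$ are closed under pointwise convergence.
   Context: A portfolio position of $v$ on $C$ is a pair $h,g:\mathbb{R}\to\mathbb{R}$ with $v(x,y)=h(x)(y-x)+g(y)$ for all $(x,y)\in C$. A path in $E_o$ from $(x,y)\in E_o$ to $(x',y')\in E_o$ is a tuple $(x_i,y_i)_{i=1}^k\in E_o^k$, $k\in\mathbb{N}_0$, such that all points $(x,y),(x_1,y),(x_1,y_1),(x_2,y_1),\dots,(x_k,y_k),(x',y_k),(x',y')$ belong to $E_o$. Points are connected if there is a path between them; this is an equivalence relation on $E_o$ whose equivalence classes are the connected components. A cycle is a path from a point to itself; a cycle $(x_i,y_i)_{i=1}^k$ is identifying if $\prod_{i=1}^k(y_i-x_i)-\prod_{i=1}^k(y_i-x_{i+1})\neq0$ with $x_{k+1}:=x_1$. *)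

theory Defs
  imports Complex_Main
begin

definition Eo :: "(real \<times> real) set \<Rightarrow> (real \<times> real) set" where
  "Eo E = {p \<in> E. fst p \<noteq> snd p}"

text \<open>epath S p ps q: the tuple ps is a path in S from p to q, i.e. all points
  (x,y),(x1,y),(x1,y1),(x2,y1),...,(xk,yk),(x',yk),(x',y') lie in S.\<close>
fun epath :: "(real \<times> real) set \<Rightarrow> real \<times> real \<Rightarrow> (real \<times> real) list \<Rightarrow> real \<times> real \<Rightarrow> bool" where
  "epath S (x, y) [] (x', y') = ((x, y) \<in> S \<and> (x', y) \<in> S \<and> (x', y') \<in> S)"
| "epath S (x, y) ((a, b) # ps) q = ((x, y) \<in> S \<and> (a, y) \<in> S \<and> set ((a, b) # ps) \<subseteq> S \<and> epath S (a, b) ps q)"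

definition path_connected_pts :: "(real \<times> real) set \<Rightarrow> real \<times> real \<Rightarrow> real \<times> real \<Rightarrow> bool" where
  "path_connected_pts S p q = (\<exists>ps. epath S p ps q)"

definition is_component :: "(real \<times> real) set \<Rightarrow> (real \<times> real) set \<Rightarrow> bool" where
  "is_component E C = (\<exists>p \<in> Eo E. C = {q \<in> Eo E. path_connected_pts (Eo E) p q})"

definition is_cycle :: "(real \<times> real) set \<Rightarrow> (real \<times> real) list \<Rightarrow> bool" where
  "is_cycle S ps = (ps \<noteq> [] \<and> epath S (hd ps) ps (hd ps))"

definition identifying :: "(real \<times> real) list \<Rightarrow> bool" where
  "identifying ps = (let k = length ps in
     (\<Prod>i<k. snd (ps ! i) - fst (ps ! i)) - (\<Prod>i<k. snd (ps ! i) - fst (ps ! ((i + 1) mod k))) \<noteq> 0)"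

definition portfolio_position :: "(real \<times> real) set \<Rightarrow> (real \<times> real \<Rightarrow> real) \<Rightarrow> (real \<Rightarrow> real) \<Rightarrow> (real \<Rightarrow> real) \<Rightarrow> bool" where
  "portfolio_position C v h g = (\<forall>(x, y) \<in> C. v (x, y) = h x * (y - x) + g y)"

end

theory Submission
  imports Defs
begin

text \<open>Moving horizontally inside C from (x, y) to (x', y) rescales y - x by the factor
  (y - x') / (y - x). Starting from a(x0) = 1 and multiplying by these factors along chains of
  horizontal moves defines a on the first projection of C; along a closed chain the product of the
  factors is the quotient of the two products in the definition of an identifying cycle, so the
  absence of identifying cycles makes a well defined, and b(y) = (y - x) / a(x) does not depend on x.
  Given y - x = a(x) b(y), two positions (h, g), (h', g') of the same v satisfy
  (h' x - h x) a(x) b(y) = g(y) - g'(y), so (h' - h) a is invariant under horizontal moves and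
  hence constant: the positions are exactly (h + c / a, g - c b). The same propagation along
  horizontal moves turns convergence of the normalized h'_n at x0 into convergence on all of C.\<close>

lemma epath_endpoints: "epath S p ps q \<Longrightarrow> p \<in> S \<and> q \<in> S"
  by (induction S p ps q rule: epath.induct) auto

lemma epath_extend_vertical: "epath S p ps (x, y) \<Longrightarrow> (x, y') \<in> S \<Longrightarrow> epath S p ps (x, y')"
  by (induction S p ps "(x, y)" rule: epath.induct) auto

lemma epath_extend_horizontal:
  "epath S p ps (x, y) \<Longrightarrow> (x', y) \<in> S \<Longrightarrow> epath S p (ps @ [(x, y)]) (x', y)"
  by (induction S p ps "(x, y)" rule: epath.induct) (auto dest: epath_endpoints)

lemma component_base:
  assumes "is_component E C"
  obtains p where "p \<in> C" and "C = {q \<in> Eo E. path_connected_pts (Eo E) p q}"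
proof -
  obtain p where p: "p \<in> Eo E" and C: "C = {q \<in> Eo E. path_connected_pts (Eo E) p q}"
    using assms unfolding is_component_def by blast
  have "epath (Eo E) p [] p"
    using p by (cases p) simp
  with p C have "p \<in> C"
    unfolding path_connected_pts_def by blast
  then show thesis
    using C that by blast
qed

lemma component_subset: "is_component E C \<Longrightarrow> C \<subseteq> Eo E"
  by (elim component_base) blast

lemma component_off_diagonal: "is_component E C \<Longrightarrow> (x, y) \<in> C \<Longrightarrow> x \<noteq> y"
  using component_subset unfolding Eo_def by fastforce

lemma component_vertical_closed:
  "is_component E C \<Longrightarrow> (x, y) \<in> C \<Longrightarrow> (x, y') \<in> Eo E \<Longrightarrow> (x, y') \<in> C"
  by (elim component_base) (auto simp: path_connected_pts_def intro: epath_extend_vertical)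

lemma component_horizontal_closed:
  "is_component E C \<Longrightarrow> (x, y) \<in> C \<Longrightarrow> (x', y) \<in> Eo E \<Longrightarrow> (x', y) \<in> C"
  by (elim component_base) (auto simp: path_connected_pts_def intro: epath_extend_horizontal)

text \<open>The step hypothesis is symmetric in x and x', so P is invariant (not merely preserved)
  along paths; this is what lets us propagate from x0 without reversing paths.\<close>

lemma component_epath_iff:
  assumes comp: "is_component E C"
    and step: "\<And>x x' y. (x, y) \<in> C \<Longrightarrow> (x', y) \<in> C \<Longrightarrow> P x \<Longrightarrow> P x'"
  shows "(x, y) \<in> C \<Longrightarrow> epath (Eo E) (x, y) ps q \<Longrightarrow> P x \<longleftrightarrow> P (fst q)"
proof (induction ps arbitrary: x y)
  case Nil
  obtain x' y' where q: "q = (x', y')"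
    by fastforce
  with Nil have "(x', y) \<in> C"
    using component_horizontal_closed[OF comp] by auto
  with Nil.prems(1) q show ?case
    using step[of x y x'] step[of x' y x] by auto
next
  case (Cons z ps)
  obtain a b where z: "z = (a, b)"
    by fastforce
  with Cons.prems have ay: "(a, y) \<in> C"
    using component_horizontal_closed[OF comp] by auto
  with Cons.prems z have "(a, b) \<in> C"
    using component_vertical_closed[OF comp] by auto
  with Cons.IH Cons.prems z have "P a \<longleftrightarrow> P (fst q)"
    by auto
  with Cons.prems(1) ay show ?case
    using step[of x y a] step[of a y x] by blast
qed

lemma component_propagate:
  assumes comp: "is_component E C" and p0: "(x0, y0) \<in> C" and x: "x \<in> fst ` C" and "P x0"
    and step: "\<And>x x' y. (x, y) \<in> C \<Longrightarrow> (x', y) \<in> C \<Longrightarrow> P x \<Longrightarrow> P x'"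
  shows "P x"
proof -
  obtain p where p: "p \<in> C" and C: "C = {q \<in> Eo E. path_connected_pts (Eo E) p q}"
    using comp by (rule component_base)
  obtain px py where p_eq: "p = (px, py)"
    by fastforce
  have base_iff: "P px \<longleftrightarrow> P u" if "(u, w) \<in> C" for u w
  proof -
    from that C obtain ps where "epath (Eo E) (px, py) ps (u, w)"
      unfolding path_connected_pts_def p_eq by blast
    with p p_eq show ?thesis
      using component_epath_iff[OF comp step] by fastforce
  qed
  obtain y where "(x, y) \<in> C"
    using x by force
  with p0 \<open>P x0\<close> show ?thesis
    using base_iff by blast
qed

text \<open>A chain from x is a list of steps (y, x'), each moving the first coordinate from x to x'
  along the horizontal line at height y inside C. Along a chain, y - x gets rescaled by
  xchain_ratio, and xchain_points lists the corner points (x_i, y_i) of the corresponding path in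
  the sense of epath.\<close>

fun xchain :: "(real \<times> real) set \<Rightarrow> real \<Rightarrow> (real \<times> real) list \<Rightarrow> bool" where
  "xchain C x [] = True"
| "xchain C x ((y, x') # c) = ((x, y) \<in> C \<and> (x', y) \<in> C \<and> xchain C x' c)"

fun xchain_end :: "real \<Rightarrow> (real \<times> real) list \<Rightarrow> real" where
  "xchain_end x [] = x"
| "xchain_end x ((y, x') # c) = xchain_end x' c"

fun xchain_ratio :: "real \<Rightarrow> (real \<times> real) list \<Rightarrow> real" where
  "xchain_ratio x [] = 1"
| "xchain_ratio x ((y, x') # c) = (y - x') / (y - x) * xchain_ratio x' c"

fun xchain_reverse :: "real \<Rightarrow> (real \<times> real) list \<Rightarrow> (real \<times> real) list" where
  "xchain_reverse x [] = []"
| "xchain_reverse x ((y, x') # c) = xchain_reverse x' c @ [(y, x)]"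

fun xchain_points :: "real \<Rightarrow> (real \<times> real) list \<Rightarrow> (real \<times> real) list" where
  "xchain_points x [] = []"
| "xchain_points x ((y, x') # c) = (x, y) # xchain_points x' c"

lemma xchain_append: "xchain C x (c @ d) \<longleftrightarrow> xchain C x c \<and> xchain C (xchain_end x c) d"
  by (induction x c rule: xchain_end.induct) auto

lemma xchain_end_append: "xchain_end x (c @ d) = xchain_end (xchain_end x c) d"
  by (induction x c rule: xchain_end.induct) auto

lemma xchain_ratio_append: "xchain_ratio x (c @ d) = xchain_ratio x c * xchain_ratio (xchain_end x c) d"
  by (induction x c rule: xchain_end.induct) auto

lemma xchain_end_conv_last: "xchain_end x c = last (x # map snd c)"
  by (induction x c rule: xchain_end.induct) auto

lemma xchain_end_reverse: "xchain_end (xchain_end x c) (xchain_reverse x c) = x"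
  by (induction x c rule: xchain_end.induct) (auto simp: xchain_end_append)

lemma xchain_reverse: "xchain C x c \<Longrightarrow> xchain C (xchain_end x c) (xchain_reverse x c)"
  by (induction x c rule: xchain_end.induct) (auto simp: xchain_append xchain_end_append xchain_end_reverse)

lemma xchain_ratio_nonzero:
  "xchain C x c \<Longrightarrow> (\<And>x y. (x, y) \<in> C \<Longrightarrow> x \<noteq> y) \<Longrightarrow> xchain_ratio x c \<noteq> 0"
  by (induction x c rule: xchain_end.induct) fastforce+

lemma xchain_ratio_reverse:
  assumes "xchain C x c" and "\<And>x y. (x, y) \<in> C \<Longrightarrow> x \<noteq> y"
  shows "xchain_ratio (xchain_end x c) (xchain_reverse x c) * xchain_ratio x c = 1"
  using assms
proof (induction x c rule: xchain_end.induct)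
  case (2 x y x' c)
  then have "y \<noteq> x" "y \<noteq> x'"
    by fastforce+
  with 2 show ?case
    by (simp add: xchain_ratio_append xchain_end_reverse)
qed simp

lemma set_xchain_points: "xchain C x c \<Longrightarrow> set (xchain_points x c) \<subseteq> C"
  by (induction x c rule: xchain_end.induct) auto

lemma length_xchain_points: "length (xchain_points x c) = length c"
  by (induction x c rule: xchain_end.induct) auto

lemma nth_xchain_points:
  "i < length c \<Longrightarrow> xchain_points x c ! i = ((x # map snd c) ! i, fst (c ! i))"
  by (induction x c arbitrary: i rule: xchain_end.induct) (auto simp: nth_Cons split: nat.split)

lemma prod_xchain_ratio:
  assumes "xchain C x c" and "\<And>x y. (x, y) \<in> C \<Longrightarrow> x \<noteq> y"
  shows "(\<Prod>i<length c. fst (c ! i) - (x # map snd c) ! i) * xchain_ratio x c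
       = (\<Prod>i<length c. fst (c ! i) - snd (c ! i))"
  using assms
proof (induction x c rule: xchain_end.induct)
  case (2 x y x' c)
  then have "y \<noteq> x"
    by fastforce
  with 2 show ?case
    by (simp add: prod.lessThan_Suc_shift del: prod.lessThan_Suc)
qed simp

lemma epath_xchain_points:
  assumes "C \<subseteq> S" "xchain C x' c" "(x, y) \<in> C" "(x', y) \<in> C" "(xchain_end x' c, y') \<in> C"
  shows "epath S (x, y) (xchain_points x' c) (xchain_end x' c, y')"
  using assms
proof (induction x' c arbitrary: x y rule: xchain_end.induct)
  case (2 x' w x'' c)
  then show ?case
    using set_xchain_points[of C x'' c] by auto
qed auto

lemma closed_xchain_is_cycle:
  assumes "C \<subseteq> S" "xchain C x c" "xchain_end x c = x" "c \<noteq> []"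
  shows "is_cycle S (xchain_points x c)"
proof -
  obtain y x' d where c: "c = (y, x') # d"
    using \<open>c \<noteq> []\<close> by (metis list.exhaust surj_pair)
  with assms(2) have "(x, y) \<in> C"
    by simp
  then have "epath S (x, y) (xchain_points x c) (x, y)"
    using epath_xchain_points[OF assms(1,2), of x y y] assms(3) by simp
  then show ?thesis
    unfolding is_cycle_def using c by simp
qed

lemma identifying_closed_xchain_iff:
  assumes ch: "xchain C x c" and closed: "xchain_end x c = x" and "c \<noteq> []"
    and offdiag: "\<And>x y. (x, y) \<in> C \<Longrightarrow> x \<noteq> y"
  shows "identifying (xchain_points x c) \<longleftrightarrow> xchain_ratio x c \<noteq> 1"
proof -
  let ?ps = "xchain_points x c" and ?k = "length c" and ?xs = "x # map snd c"
  have point: "?ps ! i = (?xs ! i, fst (c ! i))" if "i < ?k" for i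
    using that by (rule nth_xchain_points)
  have next_point: "fst (?ps ! ((i + 1) mod ?k)) = snd (c ! i)" if "i < ?k" for i
  proof (cases "i + 1 < ?k")
    case True
    then show ?thesis
      using point[of "i + 1"] by simp
  next
    case False
    with that have i: "i = ?k - 1"
      by simp
    have "x = last ?xs"
      using closed by (simp add: xchain_end_conv_last)
    also have "\<dots> = snd (c ! i)"
      using \<open>c \<noteq> []\<close> i by (simp add: last_map last_conv_nth)
    finally show ?thesis
      using \<open>c \<noteq> []\<close> i point[of 0] by simp
  qed
  define P where "P = (\<Prod>i<?k. fst (c ! i) - ?xs ! i)"
  have P1: "(\<Prod>i<?k. snd (?ps ! i) - fst (?ps ! i)) = P"
    unfolding P_def using point by (intro prod.cong) auto
  have "(\<Prod>i<?k. snd (?ps ! i) - fst (?ps ! ((i + 1) mod ?k))) = (\<Prod>i<?k. fst (c ! i) - snd (c ! i))"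
    using point next_point by (intro prod.cong) auto
  also have "\<dots> = P * xchain_ratio x c"
    unfolding P_def using ch offdiag by (rule prod_xchain_ratio[symmetric])
  finally have P2: "(\<Prod>i<?k. snd (?ps ! i) - fst (?ps ! ((i + 1) mod ?k))) = P * xchain_ratio x c" .
  have "fst (c ! i) - ?xs ! i \<noteq> 0" if "i < ?k" for i
  proof -
    have "?ps ! i \<in> C"
      using that set_xchain_points[OF ch] length_xchain_points by (metis nth_mem subsetD)
    then show ?thesis
      using offdiag point[OF that] by force
  qed
  then have "P \<noteq> 0"
    unfolding P_def by simp
  then show ?thesis
    unfolding identifying_def Let_def length_xchain_points P1 P2 by simp
qed

lemma closed_xchain_ratio:
  assumes "C \<subseteq> S" "xchain C x c" "xchain_end x c = x"
    and offdiag: "\<And>x y. (x, y) \<in> C \<Longrightarrow> x \<noteq> y"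
    and noid: "\<forall>ps. set ps \<subseteq> C \<longrightarrow> is_cycle S ps \<longrightarrow> \<not> identifying ps"
  shows "xchain_ratio x c = 1"
proof (cases "c = []")
  case False
  have "is_cycle S (xchain_points x c)"
    using assms(1-3) False by (rule closed_xchain_is_cycle)
  with noid set_xchain_points[OF assms(2)] have "\<not> identifying (xchain_points x c)"
    by blast
  then show ?thesis
    using identifying_closed_xchain_iff[OF assms(2,3) False offdiag] by blast
qed simp

lemma xchain_ratio_path_independent:
  assumes "C \<subseteq> S"
    and offdiag: "\<And>x y. (x, y) \<in> C \<Longrightarrow> x \<noteq> y"
    and noid: "\<forall>ps. set ps \<subseteq> C \<longrightarrow> is_cycle S ps \<longrightarrow> \<not> identifying ps"
    and c: "xchain C x c" and d: "xchain C x d" and ends: "xchain_end x c = xchain_end x d"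
  shows "xchain_ratio x c = xchain_ratio x d"
proof -
  let ?back = "xchain_reverse x d"
  have "xchain C x (c @ ?back)" "xchain_end x (c @ ?back) = x"
    using c xchain_reverse[OF d] ends xchain_end_reverse[of x d]
    by (simp_all add: xchain_append xchain_end_append)
  then have "xchain_ratio x (c @ ?back) = 1"
    using closed_xchain_ratio[OF assms(1) _ _ offdiag noid] by blast
  then have "xchain_ratio x c * xchain_ratio (xchain_end x d) ?back = 1"
    using ends by (simp add: xchain_ratio_append)
  moreover have "xchain_ratio (xchain_end x d) ?back * xchain_ratio x d = 1"
    using d offdiag by (rule xchain_ratio_reverse)
  ultimately show ?thesis
    by (metis mult.assoc mult_1_left mult_1_right)
qed

lemma component_xchain:
  assumes comp: "is_component E C" and p0: "(x0, y0) \<in> C" and x: "x \<in> fst ` C"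
  obtains c where "xchain C x0 c" "xchain_end x0 c = x"
proof -
  have "\<exists>c. xchain C x0 c \<and> xchain_end x0 c = x"
  proof (rule component_propagate[OF comp p0 x])
    show "\<exists>c. xchain C x0 c \<and> xchain_end x0 c = x0"
      using xchain.simps(1) xchain_end.simps(1) by blast
  next
    fix u u' y
    assume "(u, y) \<in> C" "(u', y) \<in> C" "\<exists>c. xchain C x0 c \<and> xchain_end x0 c = u"
    then have "\<exists>c. xchain C x0 (c @ [(y, u')]) \<and> xchain_end x0 (c @ [(y, u')]) = u'"
      by (auto simp: xchain_append xchain_end_append)
    then show "\<exists>c. xchain C x0 c \<and> xchain_end x0 c = u'"
      by blast
  qed
  then show thesis
    using that by blast
qed

lemma component_ratio_potential:
  assumes comp: "is_component E C"
    and noid: "\<forall>ps. set ps \<subseteq> C \<longrightarrow> is_cycle (Eo E) ps \<longrightarrow> \<not> identifying ps"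
    and p0: "(x0, y0) \<in> C"
  obtains a where "\<And>x. a x \<noteq> 0" and "a x0 = 1"
    and "\<And>x x' y. (x, y) \<in> C \<Longrightarrow> (x', y) \<in> C \<Longrightarrow> (y - x) / a x = (y - x') / a x'"
proof -
  note offdiag = component_off_diagonal[OF comp]
  define a where "a x = (if \<exists>c. xchain C x0 c \<and> xchain_end x0 c = x
    then xchain_ratio x0 (SOME c. xchain C x0 c \<and> xchain_end x0 c = x) else 1)" for x
  have a_end: "a (xchain_end x0 c) = xchain_ratio x0 c" if c: "xchain C x0 c" for c
  proof -
    let ?d = "SOME d. xchain C x0 d \<and> xchain_end x0 d = xchain_end x0 c"
    have "\<exists>d. xchain C x0 d \<and> xchain_end x0 d = xchain_end x0 c"
      using c by blast
    then have d: "xchain C x0 ?d \<and> xchain_end x0 ?d = xchain_end x0 c"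
      by (rule someI_ex)
    have "a (xchain_end x0 c) = xchain_ratio x0 ?d"
      using c unfolding a_def by auto
    also have "\<dots> = xchain_ratio x0 c"
      using xchain_ratio_path_independent[OF component_subset[OF comp] offdiag noid] d c by blast
    finally show ?thesis .
  qed
  have a_nonzero: "a x \<noteq> 0" for x
  proof (cases "\<exists>c. xchain C x0 c \<and> xchain_end x0 c = x")
    case True
    then obtain c where c: "xchain C x0 c" and "xchain_end x0 c = x"
      by blast
    then have "a x = xchain_ratio x0 c"
      using a_end by blast
    also have "\<dots> \<noteq> 0"
      using c offdiag by (rule xchain_ratio_nonzero)
    finally show ?thesis .
  qed (auto simp: a_def)
  have potential: "(y - x) / a x = (y - x') / a x'" if xy: "(x, y) \<in> C" and x'y: "(x', y) \<in> C" for x x' y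
  proof -
    have "x \<in> fst ` C"
      using xy by force
    then obtain c where c: "xchain C x0 c" "xchain_end x0 c = x"
      by (rule component_xchain[OF comp p0])
    then have c': "xchain C x0 (c @ [(y, x')])"
      using xy x'y by (simp add: xchain_append)
    have "a x' = a (xchain_end x0 (c @ [(y, x')]))"
      by (simp add: xchain_end_append)
    also have "\<dots> = xchain_ratio x0 (c @ [(y, x')])"
      using c' by (rule a_end)
    also have "\<dots> = a x * ((y - x') / (y - x))"
      using a_end[OF c(1)] c(2) by (simp add: xchain_ratio_append)
    finally have "a x' = a x * ((y - x') / (y - x))" .
    moreover have "y \<noteq> x"
      using offdiag xy by blast
    ultimately show ?thesis
      using a_nonzero[of x] a_nonzero[of x'] by (simp add: field_simps)
  qed
  have "a x0 = 1"
    using a_end[of "[]"] by simp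
  with a_nonzero show thesis
    using potential by (rule that)
qed

lemma component_factorization_exists:
  assumes comp: "is_component E C"
    and noid: "\<forall>ps. set ps \<subseteq> C \<longrightarrow> is_cycle (Eo E) ps \<longrightarrow> \<not> identifying ps"
    and p0: "(x0, y0) \<in> C"
  shows "\<exists>a b. (\<forall>x. a x \<noteq> 0) \<and> (\<forall>y. b y \<noteq> 0)
    \<and> (\<forall>(x, y) \<in> C. a x * b y = y - x) \<and> a x0 = 1"
proof -
  obtain a where a_nonzero: "\<And>x. a x \<noteq> 0" and "a x0 = 1"
    and potential: "\<And>x x' y. (x, y) \<in> C \<Longrightarrow> (x', y) \<in> C \<Longrightarrow> (y - x) / a x = (y - x') / a x'"
    using component_ratio_potential[OF comp noid p0] by blast
  define b where "b y = (if \<exists>x. (x, y) \<in> C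
    then (y - (SOME x. (x, y) \<in> C)) / a (SOME x. (x, y) \<in> C) else 1)" for y
  have b: "b y = (y - x) / a x" if xy: "(x, y) \<in> C" for x y
  proof -
    let ?x = "SOME x. (x, y) \<in> C"
    have "(?x, y) \<in> C"
      using xy by (rule someI)
    moreover have "b y = (y - ?x) / a ?x"
      using xy unfolding b_def by auto
    ultimately show ?thesis
      using potential xy by metis
  qed
  have b_nonzero: "b y \<noteq> 0" for y
  proof (cases "\<exists>x. (x, y) \<in> C")
    case True
    then obtain x where xy: "(x, y) \<in> C"
      by blast
    then have "x \<noteq> y"
      by (rule component_off_diagonal[OF comp])
    with b[OF xy] a_nonzero[of x] show ?thesis
      by simp
  qed (simp add: b_def)
  have "a x * b y = y - x" if "(x, y) \<in> C" for x y
    using b[OF that] a_nonzero[of x] by simp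
  with a_nonzero b_nonzero \<open>a x0 = 1\<close> show ?thesis
    by blast
qed

lemma component_factorization_unique:
  assumes comp: "is_component E C" and p0: "(x0, y0) \<in> C"
    and a: "\<forall>x. a x \<noteq> 0" and b: "\<forall>y. b y \<noteq> 0"
    and ab: "\<forall>(x, y) \<in> C. a x * b y = y - x" and "a x0 = 1"
    and ab': "\<forall>(x, y) \<in> C. a' x * b' y = y - x" and "a' x0 = 1"
  shows "(\<forall>x \<in> fst ` C. a' x = a x) \<and> (\<forall>y \<in> snd ` C. b' y = b y)"
proof -
  have b_eq: "b' y = b y" if xy: "(x, y) \<in> C" and "a' x = a x" for x y
  proof -
    have "a x * b' y = a x * b y"
      using ab ab' xy \<open>a' x = a x\<close> by fastforce
    then show ?thesis
      using a by simp
  qed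
  have a_eq: "a' x = a x" if "x \<in> fst ` C" for x
  proof (rule component_propagate[OF comp p0 that])
    show "a' x0 = a x0"
      using \<open>a x0 = 1\<close> \<open>a' x0 = 1\<close> by simp
  next
    fix x x' y
    assume xy: "(x, y) \<in> C" and x'y: "(x', y) \<in> C" and "a' x = a x"
    have "b' y = b y"
      using xy \<open>a' x = a x\<close> by (rule b_eq)
    then have "a' x' * b y = a x' * b y"
      using ab ab' x'y by fastforce
    then show "a' x' = a x'"
      using b by simp
  qed
  show ?thesis
    using a_eq b_eq by fastforce
qed

lemma shifted_position_eq:
  fixes a b c h g x y :: "'a :: field"
  assumes "a * b = y - x" and "a \<noteq> 0"
  shows "h * (y - x) + g = (h + c / a) * (y - x) + (g - c * b)"
proof -
  have "c / a * (y - x) = c * b"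
    using assms by (simp flip: assms(1))
  then show ?thesis
    by (simp add: algebra_simps)
qed

lemma portfolio_position_shift:
  assumes "portfolio_position C v h g" and "\<forall>x. a x \<noteq> 0" and "\<forall>(x, y) \<in> C. a x * b y = y - x"
  shows "portfolio_position C v (\<lambda>x. h x + c / a x) (\<lambda>y. g y - c * b y)"
  using assms shifted_position_eq unfolding portfolio_position_def by fastforce

lemma component_portfolio_positions_differ_by_shift:
  assumes comp: "is_component E C" and p0: "(x0, y0) \<in> C"
    and a: "\<forall>x. a x \<noteq> 0" and b: "\<forall>y. b y \<noteq> 0"
    and ab: "\<forall>(x, y) \<in> C. a x * b y = y - x" and "a x0 = 1"
    and hg: "portfolio_position C v h g" and hg': "portfolio_position C v h' g'"
  shows "(\<forall>x \<in> fst ` C. h' x = h x + (h' x0 - h x0) / a x)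
    \<and> (\<forall>y \<in> snd ` C. g' y = g y - (h' x0 - h x0) * b y)"
proof -
  let ?c = "h' x0 - h x0"
  have diff: "(h' x - h x) * a x * b y = g y - g' y" if xy: "(x, y) \<in> C" for x y
  proof -
    have "(h' x - h x) * (y - x) = g y - g' y"
      using hg hg' xy unfolding portfolio_position_def by (fastforce simp: algebra_simps)
    then show ?thesis
      using ab xy by (auto simp: mult.assoc)
  qed
  have const: "(h' x - h x) * a x = ?c" if "x \<in> fst ` C" for x
  proof (rule component_propagate[OF comp p0 that])
    show "(h' x0 - h x0) * a x0 = ?c"
      using \<open>a x0 = 1\<close> by simp
  next
    fix x x' y
    assume xy: "(x, y) \<in> C" and x'y: "(x', y) \<in> C" and "(h' x - h x) * a x = ?c"
    then have "?c * b y = (h' x' - h x') * a x' * b y"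
      using diff[OF xy] diff[OF x'y] by simp
    then show "(h' x' - h x') * a x' = ?c"
      using b by simp
  qed
  have "h' x = h x + ?c / a x" if "x \<in> fst ` C" for x
    using const[OF that] a by (simp add: field_simps)
  moreover have "g' y = g y - ?c * b y" if y: "y \<in> snd ` C" for y
  proof -
    obtain x where xy: "(x, y) \<in> C"
      using y by force
    then have "?c * b y = g y - g' y"
      using diff[OF xy] const[of x] by force
    then show ?thesis
      by simp
  qed
  ultimately show ?thesis
    by blast
qed

lemma component_portfolio_positions_one_parameter:
  assumes comp: "is_component E C"
    and noid: "\<forall>ps. set ps \<subseteq> C \<longrightarrow> is_cycle (Eo E) ps \<longrightarrow> \<not> identifying ps"
    and hg: "portfolio_position C v h g"
  shows "\<exists>h0 g0 \<alpha> \<beta>. (\<forall>c. portfolio_position C v (\<lambda>x. h0 x + c * \<alpha> x) (\<lambda>y. g0 y + c * \<beta> y))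
    \<and> (\<forall>h' g'. portfolio_position C v h' g' \<longrightarrow>
         (\<exists>!c. (\<forall>x \<in> fst ` C. h' x = h0 x + c * \<alpha> x) \<and> (\<forall>y \<in> snd ` C. g' y = g0 y + c * \<beta> y)))"
proof -
  obtain x0 y0 where p0: "(x0, y0) \<in> C"
    using component_base[OF comp] by (metis surj_pair)
  then obtain a b where a: "\<forall>x. a x \<noteq> 0" and b: "\<forall>y. b y \<noteq> 0"
    and ab: "\<forall>(x, y) \<in> C. a x * b y = y - x" and "a x0 = 1"
    using component_factorization_exists[OF comp noid] by blast
  define \<alpha> where "\<alpha> x = 1 / a x" for x
  define \<beta> where "\<beta> y = - b y" for y
  have "portfolio_position C v (\<lambda>x. h x + c * \<alpha> x) (\<lambda>y. g y + c * \<beta> y)" for c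
    using portfolio_position_shift[OF hg a ab, of c] unfolding \<alpha>_def \<beta>_def by simp
  moreover have "\<exists>!c. (\<forall>x \<in> fst ` C. h' x = h x + c * \<alpha> x) \<and> (\<forall>y \<in> snd ` C. g' y = g y + c * \<beta> y)"
    if hg': "portfolio_position C v h' g'" for h' g'
  proof (rule ex1I)
    show "(\<forall>x \<in> fst ` C. h' x = h x + (h' x0 - h x0) * \<alpha> x)
      \<and> (\<forall>y \<in> snd ` C. g' y = g y + (h' x0 - h x0) * \<beta> y)"
      using component_portfolio_positions_differ_by_shift[OF comp p0 a b ab \<open>a x0 = 1\<close> hg hg']
      unfolding \<alpha>_def \<beta>_def by simp
  next
    fix c
    assume "(\<forall>x \<in> fst ` C. h' x = h x + c * \<alpha> x) \<and> (\<forall>y \<in> snd ` C. g' y = g y + c * \<beta> y)"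
    moreover have "x0 \<in> fst ` C"
      using p0 by force
    ultimately have "h' x0 = h x0 + c * \<alpha> x0"
      by blast
    then show "c = h' x0 - h x0"
      using \<open>a x0 = 1\<close> unfolding \<alpha>_def by simp
  qed
  ultimately show ?thesis
    by blast
qed

lemma component_portfolio_position_not_unique:
  assumes comp: "is_component E C"
    and noid: "\<forall>ps. set ps \<subseteq> C \<longrightarrow> is_cycle (Eo E) ps \<longrightarrow> \<not> identifying ps"
    and hg: "portfolio_position C v h g"
  shows "\<forall>(x, y) \<in> C. \<exists>h g h' g'. portfolio_position C v h g \<and> portfolio_position C v h' g'
    \<and> h x \<noteq> h' x \<and> g y \<noteq> g' y"
proof -
  obtain x0 y0 where p0: "(x0, y0) \<in> C"
    using component_base[OF comp] by (metis surj_pair)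
  then obtain a b where a: "\<forall>x. a x \<noteq> 0" and b: "\<forall>y. b y \<noteq> 0"
    and ab: "\<forall>(x, y) \<in> C. a x * b y = y - x"
    using component_factorization_exists[OF comp noid] by blast
  define h' where "h' x = h x + 1 / a x" for x
  define g' where "g' y = g y - 1 * b y" for y
  have "portfolio_position C v h' g'"
    unfolding h'_def g'_def using hg a ab by (rule portfolio_position_shift)
  moreover have "h x \<noteq> h' x" and "g y \<noteq> g' y" for x y
    unfolding h'_def g'_def using a b by auto
  ultimately show ?thesis
    using hg by blast
qed

lemma component_positions_tendsto:
  assumes comp: "is_component E C" and p0: "(x0, y0) \<in> C"
    and lim: "\<forall>(x, y) \<in> C. (\<lambda>n. h n x * (y - x) + g n y) \<longlonglongrightarrow> v (x, y)"
    and conv0: "convergent (\<lambda>n. h n x0)"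
  shows "\<exists>h' g'. (\<forall>x \<in> fst ` C. (\<lambda>n. h n x) \<longlonglongrightarrow> h' x)
    \<and> (\<forall>y \<in> snd ` C. (\<lambda>n. g n y) \<longlonglongrightarrow> g' y) \<and> portfolio_position C v h' g'"
proof -
  have lim': "(\<lambda>n. h n x * (y - x) + g n y) \<longlonglongrightarrow> v (x, y)" if "(x, y) \<in> C" for x y
    using lim that by blast
  have "convergent (\<lambda>n. h n x)" if "x \<in> fst ` C" for x
  proof (rule component_propagate[OF comp p0 that])
    show "convergent (\<lambda>n. h n x0)"
      by (rule conv0)
  next
    fix x x' y
    assume xy: "(x, y) \<in> C" and x'y: "(x', y) \<in> C" and "convergent (\<lambda>n. h n x)"
    then obtain l where l: "(\<lambda>n. h n x) \<longlonglongrightarrow> l"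
      by (auto simp: convergent_def)
    have "x' \<noteq> y"
      using x'y by (rule component_off_diagonal[OF comp])
    let ?rebuild = "\<lambda>n.
      ((h n x' * (y - x') + g n y) - (h n x * (y - x) + g n y) + h n x * (y - x)) / (y - x')"
    have "?rebuild \<longlonglongrightarrow> (v (x', y) - v (x, y) + l * (y - x)) / (y - x')"
      using lim'[OF xy] lim'[OF x'y] l \<open>x' \<noteq> y\<close> by (intro tendsto_intros) auto
    moreover have "?rebuild = (\<lambda>n. h n x')"
      using \<open>x' \<noteq> y\<close> by (intro ext) (simp add: field_simps)
    ultimately show "convergent (\<lambda>n. h n x')"
      unfolding convergent_def by metis
  qed
  then have lim_h: "(\<lambda>n. h n x) \<longlonglongrightarrow> lim (\<lambda>n. h n x)" if "x \<in> fst ` C" for x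
    using that by (simp add: convergent_LIMSEQ_iff)
  have lim_g: "(\<lambda>n. g n y) \<longlonglongrightarrow> v (x, y) - lim (\<lambda>n. h n x) * (y - x)" if xy: "(x, y) \<in> C" for x y
  proof -
    have "x \<in> fst ` C"
      using xy by force
    then have "(\<lambda>n. (h n x * (y - x) + g n y) - h n x * (y - x))
        \<longlonglongrightarrow> v (x, y) - lim (\<lambda>n. h n x) * (y - x)"
      using lim'[OF xy] lim_h by (intro tendsto_intros)
    then show ?thesis
      by simp
  qed
  have lim_g': "(\<lambda>n. g n y) \<longlonglongrightarrow> lim (\<lambda>n. g n y)" if y: "y \<in> snd ` C" for y
  proof -
    obtain x where "(x, y) \<in> C"
      using y by force
    then have "convergent (\<lambda>n. g n y)"
      using lim_g unfolding convergent_def by blast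
    then show ?thesis
      by (simp add: convergent_LIMSEQ_iff)
  qed
  have "portfolio_position C v (\<lambda>x. lim (\<lambda>n. h n x)) (\<lambda>y. lim (\<lambda>n. g n y))"
    unfolding portfolio_position_def
  proof (clarify)
    fix x y
    assume "(x, y) \<in> C"
    then have "lim (\<lambda>n. g n y) = v (x, y) - lim (\<lambda>n. h n x) * (y - x)"
      by (rule lim_g[THEN limI])
    then show "v (x, y) = lim (\<lambda>n. h n x) * (y - x) + lim (\<lambda>n. g n y)"
      by simp
  qed
  moreover have "\<forall>x \<in> fst ` C. (\<lambda>n. h n x) \<longlonglongrightarrow> lim (\<lambda>n. h n x)"
    using lim_h by blast
  moreover have "\<forall>y \<in> snd ` C. (\<lambda>n. g n y) \<longlonglongrightarrow> lim (\<lambda>n. g n y)"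
    using lim_g' by blast
  ultimately show ?thesis
    by (intro exI conjI)
qed

lemma component_normalized_positions_tendsto:
  assumes comp: "is_component E C" and p0: "(x0, y0) \<in> C"
    and a: "\<forall>x. a x \<noteq> 0" and ab: "\<forall>(x, y) \<in> C. a x * b y = y - x" and "a x0 = 1"
    and lim: "\<forall>(x, y) \<in> C. (\<lambda>n. h n x * (y - x) + g n y) \<longlonglongrightarrow> v (x, y)"
  shows "(\<forall>n. \<forall>(x, y) \<in> C.
        h n x * (y - x) + g n y = (h n x - h n x0 / a x) * (y - x) + (g n y + h n x0 * b y))
    \<and> (\<exists>h' g'. (\<forall>x \<in> fst ` C. (\<lambda>n. h n x - h n x0 / a x) \<longlonglongrightarrow> h' x)
        \<and> (\<forall>y \<in> snd ` C. (\<lambda>n. g n y + h n x0 * b y) \<longlonglongrightarrow> g' y) \<and> portfolio_position C v h' g')"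
proof -
  have shift: "h n x * (y - x) + g n y = (h n x - h n x0 / a x) * (y - x) + (g n y + h n x0 * b y)"
    if "(x, y) \<in> C" for n x y
    using shifted_position_eq[of "a x" "b y" y x "h n x" "g n y" "- h n x0"] a ab that by auto
  moreover have "\<exists>h' g'. (\<forall>x \<in> fst ` C. (\<lambda>n. h n x - h n x0 / a x) \<longlonglongrightarrow> h' x)
      \<and> (\<forall>y \<in> snd ` C. (\<lambda>n. g n y + h n x0 * b y) \<longlonglongrightarrow> g' y) \<and> portfolio_position C v h' g'"
  proof (rule component_positions_tendsto[OF comp p0])
    show "\<forall>(x, y) \<in> C.
        (\<lambda>n. (h n x - h n x0 / a x) * (y - x) + (g n y + h n x0 * b y)) \<longlonglongrightarrow> v (x, y)"
    proof (clarify)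
      fix x y
      assume xy: "(x, y) \<in> C"
      then have "(\<lambda>n. h n x * (y - x) + g n y) \<longlonglongrightarrow> v (x, y)"
        using lim by blast
      then show "(\<lambda>n. (h n x - h n x0 / a x) * (y - x) + (g n y + h n x0 * b y)) \<longlonglongrightarrow> v (x, y)"
        by (simp only: shift[OF xy])
    qed
    show "convergent (\<lambda>n. h n x0 - h n x0 / a x0)"
      using \<open>a x0 = 1\<close> by (simp add: convergent_const)
  qed
  ultimately show ?thesis
    by blast
qed

theorem proposition2p8:
  fixes E C :: "(real \<times> real) set"
  assumes comp: "is_component E C"
    and noid: "\<forall>ps. set ps \<subseteq> C \<longrightarrow> is_cycle (Eo E) ps \<longrightarrow> \<not> identifying ps"
  shows
    "(\<forall>v :: real \<times> real \<Rightarrow> real. (\<exists>h g. portfolio_position C v h g) \<longrightarrow>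
        (\<forall>(x, y) \<in> C. \<exists>h g h' g'. portfolio_position C v h g \<and> portfolio_position C v h' g' \<and>
                                   h x \<noteq> h' x \<and> g y \<noteq> g' y)
      \<and> (\<exists>h0 g0 \<alpha> \<beta> :: real \<Rightarrow> real.
           (\<forall>c. portfolio_position C v (\<lambda>x. h0 x + c * \<alpha> x) (\<lambda>y. g0 y + c * \<beta> y))
         \<and> (\<forall>h g. portfolio_position C v h g \<longrightarrow>
              (\<exists>!c. (\<forall>x \<in> fst ` C. h x = h0 x + c * \<alpha> x) \<and> (\<forall>y \<in> snd ` C. g y = g0 y + c * \<beta> y)))))
   \<and> (\<forall>x0 y0. (x0, y0) \<in> C \<longrightarrow>
        (\<exists>a b :: real \<Rightarrow> real. (\<forall>x. a x \<noteq> 0) \<and> (\<forall>y. b y \<noteq> 0) \<and>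
            (\<forall>(x, y) \<in> C. a x * b y = y - x) \<and> a x0 = 1)
      \<and> (\<forall>a b a' b' :: real \<Rightarrow> real.
            (\<forall>x. a x \<noteq> 0) \<and> (\<forall>y. b y \<noteq> 0) \<and> (\<forall>(x, y) \<in> C. a x * b y = y - x) \<and> a x0 = 1 \<and>
            (\<forall>x. a' x \<noteq> 0) \<and> (\<forall>y. b' y \<noteq> 0) \<and> (\<forall>(x, y) \<in> C. a' x * b' y = y - x) \<and> a' x0 = 1
            \<longrightarrow> (\<forall>x \<in> fst ` C. a' x = a x) \<and> (\<forall>y \<in> snd ` C. b' y = b y))
      \<and> (\<forall>(a :: real \<Rightarrow> real) (b :: real \<Rightarrow> real) (hn :: nat \<Rightarrow> real \<Rightarrow> real) (gn :: nat \<Rightarrow> real \<Rightarrow> real)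
            (v :: real \<times> real \<Rightarrow> real).
            (\<forall>x. a x \<noteq> 0) \<and> (\<forall>y. b y \<noteq> 0) \<and> (\<forall>(x, y) \<in> C. a x * b y = y - x) \<and> a x0 = 1 \<and>
            (\<forall>(x, y) \<in> C. (\<lambda>n. hn n x * (y - x) + gn n y) \<longlonglongrightarrow> v (x, y))
            \<longrightarrow> (let h'n = (\<lambda>n x. hn n x - hn n x0 / a x);
                     g'n = (\<lambda>n y. gn n y + hn n x0 * b y)
                 in (\<forall>n. \<forall>(x, y) \<in> C. hn n x * (y - x) + gn n y = h'n n x * (y - x) + g'n n y)
                  \<and> (\<exists>h' g' :: real \<Rightarrow> real.
                        (\<forall>x \<in> fst ` C. (\<lambda>n. h'n n x) \<longlonglongrightarrow> h' x)
                      \<and> (\<forall>y \<in> snd ` C. (\<lambda>n. g'n n y) \<longlonglongrightarrow> g' y)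
                      \<and> portfolio_position C v h' g'))))"
  apply (intro conjI allI impI)
  subgoal for v
    using component_portfolio_position_not_unique[OF comp noid] by blast
  subgoal for v
    by (elim exE) (rule component_portfolio_positions_one_parameter[OF comp noid])
  subgoal for x0 y0
    by (rule component_factorization_exists[OF comp noid])
  subgoal for x0 y0 a b a' b'
    using component_factorization_unique[OF comp, of x0 y0 a b a' b'] by blast
  subgoal for x0 y0 a b a' b'
    using component_factorization_unique[OF comp, of x0 y0 a b a' b'] by blast
  subgoal for x0 y0 a b hn gn v
    using component_normalized_positions_tendsto[OF comp, of x0 y0 a b hn gn v] by (simp add: Let_def)
  done

end
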